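(* Let $\mathcal{A}$ be a finite alphabet with $\#\mathcal{A}\ge4$. Every labeled Rauzy class of irreducible pairs on $\mathcal{A}$ contains a good pair or a degenerate$^*$ pair.
   Context: Let $n=\#\mathcal{A}$. A pair is $\mathbf{p}=(p_0,p_1)$ with $p_0,p_1:\mathcal{A}\to\{1,\dots,n\}$ bijections. Irreducible: $p_0^{-1}\{1,\dots,k\}\ne p_1^{-1}\{1,\dots,k\}$ for $1\le k<n$ (the analogous definition applies on any alphabet). Rauzy move of type $\varepsilon$: $\varepsilon\mathbf{p}=(p'_0,p'_1)$, $p'_\varepsilon=p_\varepsilon$, and for $z=p_\varepsilon^{-1}(n)$, $p'_{1-\varepsilon}(b)=p_{1-\varepsilon}(b)$ if $p_{1-\varepsilon}(b)\le p_{1-\varepsilon}(z)$, $=p_{1-\varepsilon}(b)+1$ if $p_{1-\varepsilon}(z)<p_{1-\varepsilon}(b)<n$, $=p_{1-\varepsilon}(z)+1$ if $p_{1-\varepsilon}(b)=n$. The labeled Rauzy class of an irreducible $\mathbf{p}$ is the set of pairs reachable from $\mathbf{p}$ by Rauzy moves. $\mathbf{p}$ is standard if $p_0^{-1}(1)=p_1^{-1}(n)$ and $p_1^{-1}(1)=p_0^{-1}(n)$. For $\mathcal{A}'\subset\mathcal{A}$, the restriction of $\mathbf{p}$ to $\mathcal{A}'$ is the pair $(p'_0,p'_1)$ on $\mathcal{A}'$ with $p'_\varepsilon(b)=\#\{c\in\mathcal{A}':p_\varepsilon(c)\le p_\varepsilon(b)\}$. A standard pair $\mathbf{p}$ is degenerate$^*$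 if some $c\in\mathcal{A}$ has $p_0(c)=p_1(c)=n-1$. A standard pair $\mathbf{p}$ is good if its restriction to $\mathcal{A}\setminus\{p_0^{-1}(1),p_1^{-1}(1)\}$ (i.e. to positions $2,\dots,n-1$) is irreducible. *)

theory Defs
  imports Main
begin

text \<open>A pair on an alphabet A (a finite set) is p = (p0, p1), each a bijection
  A -> {1..#A}. Values outside A are irrelevant.\<close>

type_synonym 'a rpair = "('a \<Rightarrow> nat) \<times> ('a \<Rightarrow> nat)"

definition is_pair :: "'a set \<Rightarrow> 'a rpair \<Rightarrow> bool" where
  "is_pair A p \<longleftrightarrow> bij_betw (fst p) A {1..card A} \<and> bij_betw (snd p) A {1..card A}"

definition comp :: "'a rpair \<Rightarrow> bool \<Rightarrow> ('a \<Rightarrow> nat)" where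
  "comp p e = (if e then snd p else fst p)"

definition irreducible :: "'a set \<Rightarrow> 'a rpair \<Rightarrow> bool" where
  "irreducible A p \<longleftrightarrow>
     (\<forall>k. 1 \<le> k \<and> k < card A \<longrightarrow> {a\<in>A. fst p a \<le> k} \<noteq> {a\<in>A. snd p a \<le> k})"

definition rauzy_move :: "'a set \<Rightarrow> bool \<Rightarrow> 'a rpair \<Rightarrow> 'a rpair" where
  "rauzy_move A e p =
     (let n = card A; pe = comp p e; po = comp p (\<not> e);
          z = (THE z. z \<in> A \<and> pe z = n);
          po' = (\<lambda>b. if po b \<le> po z then po b
                     else if po b < n then po b + 1
                     else po z + 1)
      in if e then (po', pe) else (pe, po'))"

inductive_set rauzy_class :: "'a set \<Rightarrow> 'a rpair \<Rightarrow> 'a rpair set"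
  for A :: "'a set" and p :: "'a rpair" where
  base: "p \<in> rauzy_class A p"
| step: "q \<in> rauzy_class A p \<Longrightarrow> rauzy_move A e q \<in> rauzy_class A p"

definition standard :: "'a set \<Rightarrow> 'a rpair \<Rightarrow> bool" where
  "standard A p \<longleftrightarrow>
     (\<exists>a\<in>A. fst p a = 1 \<and> snd p a = card A) \<and>
     (\<exists>a\<in>A. snd p a = 1 \<and> fst p a = card A)"

definition restrict_pair :: "'a set \<Rightarrow> 'a rpair \<Rightarrow> 'a rpair" where
  "restrict_pair A' p =
     ((\<lambda>b. card {c\<in>A'. fst p c \<le> fst p b}), (\<lambda>b. card {c\<in>A'. snd p c \<le> snd p b}))"

definition degenerate_star :: "'a set \<Rightarrow> 'a rpair \<Rightarrow> bool" where
  "degenerate_star A p \<longleftrightarrow> standard A p \<and>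
     (\<exists>c\<in>A. fst p c = card A - 1 \<and> snd p c = card A - 1)"

definition good :: "'a set \<Rightarrow> 'a rpair \<Rightarrow> bool" where
  "good A p \<longleftrightarrow> standard A p \<and>
     (let A' = {a\<in>A. fst p a \<noteq> 1 \<and> snd p a \<noteq> 1} in irreducible A' (restrict_pair A' p))"

end

theory Submission
  imports Defs
begin

text \<open>A pair is handled through its two rows, read as lists of letters. A Rauzy move of type 0
  (resp. 1) takes the last letter of the bottom (resp. top) row and puts it right behind the letter
  that ends the other row; iterating it rotates the segment behind that letter. Irreducibility is
  invariant under moves. Starting from an irreducible pair, pulling the last top letter towards the
  front of the bottom row reaches a standard pair, with rows \<open>a T b\<close> and \<open>b B a\<close>. If such a pair
  is neither good nor degenerate*, let \<open>L\<close> be the largest \<open>l\<close> for which the first \<open>l\<close> letters of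
  \<open>T\<close> and of \<open>B\<close> form the same set. Writing \<open>T = T1 c T2\<close> and \<open>B = c B1 x R\<close> with \<open>x\<close> the last
  letter of \<open>T\<close>, a few blocks of moves produce the standard pair with inner rows \<open>T2 T1 c\<close> and
  \<open>B1 x c R\<close>, all of whose reducible prefixes are shorter than \<open>L\<close>; induction on \<open>L\<close> ends at a
  good or a degenerate* pair.\<close>

lemma last_notin_set_take:
  assumes "distinct xs" "k < length xs"
  shows "last xs \<notin> set (take k xs)"
proof
  assume "last xs \<in> set (take k xs)"
  then obtain i where "i < k" "xs ! i = last xs"
    using assms(2) by (auto simp: in_set_conv_nth)
  moreover have "last xs = xs ! (length xs - 1)"
    using assms(2) by (intro last_conv_nth) auto
  ultimately show False using assms by (simp add: nth_eq_iff_index_eq)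
qed

lemma in_set_take_append_Cons: "length xs < k \<Longrightarrow> y \<in> set (take k (xs @ y # ys))"
  by (auto simp: take_Cons' dest!: less_imp_Suc_add)

lemma take_append_Cons_le: "k \<le> Suc (length xs) \<Longrightarrow> take k (xs @ y # ys) = take k (xs @ [y])"
  by (simp add: take_Cons')

lemma set_butlast_distinct: "distinct xs \<Longrightarrow> set (butlast xs) = set xs - {last xs}"
  by (cases xs rule: rev_cases) auto

section \<open>Rauzy steps on rows\<close>

type_synonym 'a rows = "'a list \<times> 'a list"

text \<open>Rule \<open>top\<close> is the move of type 0: the top row ends with \<open>z\<close>, and the last letter \<open>w\<close> of the
  bottom row is moved right behind \<open>z\<close> (cf. \<open>rauzy_move_top_represents\<close>).\<close>

inductive rauzy_step :: "'a rows \<Rightarrow> 'a rows \<Rightarrow> bool" where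
  top: "xs \<noteq> [] \<Longrightarrow> last xs = z \<Longrightarrow> rauzy_step (xs, us @ z # vs @ [w]) (xs, us @ z # w # vs)"
| bottom: "ys \<noteq> [] \<Longrightarrow> last ys = z \<Longrightarrow> rauzy_step (us @ z # vs @ [w], ys) (us @ z # w # vs, ys)"

lemma rauzy_step_swap: "rauzy_step s t \<Longrightarrow> rauzy_step (prod.swap s) (prod.swap t)"
  by (induction rule: rauzy_step.induct) (auto intro: rauzy_step.intros)

lemma rauzy_steps_swap: "rauzy_step\<^sup>*\<^sup>* s t \<Longrightarrow> rauzy_step\<^sup>*\<^sup>* (prod.swap s) (prod.swap t)"
  by (induction rule: rtranclp_induct) (auto intro: rtranclp.rtrancl_into_rtrancl rauzy_step_swap)

lemma rauzy_steps_rotate_bottom: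
  assumes "xs \<noteq> []" "last xs = z"
  shows "rauzy_step\<^sup>*\<^sup>* (xs, us @ z # U @ V) (xs, us @ z # V @ U)"
proof (induction V arbitrary: U rule: rev_induct)
  case Nil
  show ?case by simp
next
  case (snoc w V)
  have "rauzy_step (xs, us @ z # (U @ V) @ [w]) (xs, us @ z # w # U @ V)"
    by (rule rauzy_step.top) (use assms in auto)
  with snoc.IH[of "w # U"] show ?case
    by (simp add: converse_rtranclp_into_rtranclp)
qed

lemma rauzy_steps_rotate_top:
  assumes "ys \<noteq> []" "last ys = z"
  shows "rauzy_step\<^sup>*\<^sup>* (us @ z # U @ V, ys) (us @ z # V @ U, ys)"
  using rauzy_steps_swap[OF rauzy_steps_rotate_bottom[OF assms]] by simp

definition perm_rows :: "'a rows \<Rightarrow> bool" where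
  "perm_rows s \<longleftrightarrow> distinct (fst s) \<and> distinct (snd s) \<and> set (fst s) = set (snd s)"

definition reducible_at :: "'a rows \<Rightarrow> nat \<Rightarrow> bool" where
  "reducible_at s k \<longleftrightarrow> 1 \<le> k \<and> k < length (fst s) \<and> set (take k (fst s)) = set (take k (snd s))"

definition irreducible_rows :: "'a rows \<Rightarrow> bool" where
  "irreducible_rows s \<longleftrightarrow> (\<forall>k. \<not> reducible_at s k)"

lemma perm_rows_length: "perm_rows s \<Longrightarrow> length (fst s) = length (snd s)"
  unfolding perm_rows_def by (metis distinct_card)

lemma perm_rows_swap [simp]: "perm_rows (prod.swap s) \<longleftrightarrow> perm_rows s"
  unfolding perm_rows_def by auto

lemma reducible_at_swap: "perm_rows s \<Longrightarrow> reducible_at (prod.swap s) k \<longleftrightarrow> reducible_at s k"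
  unfolding reducible_at_def using perm_rows_length[of s] by auto

lemma irreducible_rows_swap: "perm_rows s \<Longrightarrow> irreducible_rows (prod.swap s) \<longleftrightarrow> irreducible_rows s"
  unfolding irreducible_rows_def using reducible_at_swap by blast

lemma rauzy_step_perm_rows: "rauzy_step s t \<Longrightarrow> perm_rows s \<Longrightarrow> perm_rows t \<and> set (fst t) = set (fst s)"
  by (induction rule: rauzy_step.induct) (auto simp: perm_rows_def)

lemma rauzy_steps_perm_rows:
  "rauzy_step\<^sup>*\<^sup>* s t \<Longrightarrow> perm_rows s \<Longrightarrow> perm_rows t \<and> set (fst t) = set (fst s)"
  by (induction rule: rtranclp_induct) (auto dest: rauzy_step_perm_rows)

lemma irreducible_rows_top_step:
  assumes perm: "perm_rows (xs, us @ z # vs @ [w])" and z: "last xs = z"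
    and irr: "irreducible_rows (xs, us @ z # vs @ [w])"
  shows "irreducible_rows (xs, us @ z # w # vs)"
  unfolding irreducible_rows_def
proof (intro allI notI)
  fix k assume red: "reducible_at (xs, us @ z # w # vs) k"
  have "k \<le> length us"
  proof (rule ccontr)
    assume "\<not> k \<le> length us"
    then have "set (take (Suc (length us)) (us @ z # w # vs)) \<subseteq> set (take k (us @ z # w # vs))"
      by (intro set_take_subset_set_take) simp
    then have "z \<in> set (take k (us @ z # w # vs))" by auto
    moreover have "z \<notin> set (take k xs)"
      using last_notin_set_take[of xs k] perm red z by (auto simp: perm_rows_def reducible_at_def)
    ultimately show False using red by (auto simp: reducible_at_def)
  qed
  then have "reducible_at (xs, us @ z # vs @ [w]) k"
    using red by (simp add: reducible_at_def)
  with irr show False by (simp add: irreducible_rows_def)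
qed

lemma rauzy_step_irreducible_rows:
  "rauzy_step s t \<Longrightarrow> perm_rows s \<Longrightarrow> irreducible_rows s \<Longrightarrow> irreducible_rows t"
proof (induction rule: rauzy_step.induct)
  case (top xs z us vs w)
  then show ?case by (simp add: irreducible_rows_top_step)
next
  case (bottom ys z us vs w)
  then have "irreducible_rows (prod.swap (us @ z # w # vs, ys))"
    using irreducible_rows_top_step[of ys us z vs w] irreducible_rows_swap[of "(us @ z # vs @ [w], ys)"]
    by (simp add: perm_rows_def)
  moreover have "perm_rows (us @ z # w # vs, ys)"
    using bottom.prems rauzy_step.bottom[OF bottom.hyps] rauzy_step_perm_rows by blast
  ultimately show ?case using irreducible_rows_swap by blast
qed

lemma rauzy_steps_irreducible_rows:
  "rauzy_step\<^sup>*\<^sup>* s t \<Longrightarrow> perm_rows s \<Longrightarrow> irreducible_rows s \<Longrightarrow> irreducible_rows t"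
  by (induction rule: rtranclp_induct) (auto dest: rauzy_steps_perm_rows rauzy_step_irreducible_rows)

section \<open>Reaching a standard pair\<close>

lemma irreducible_rows_last_neq:
  assumes perm: "perm_rows (xs, ys)" and irr: "irreducible_rows (xs, ys)" and len: "2 \<le> length xs"
  shows "last xs \<noteq> last ys"
proof
  assume eq: "last xs = last ys"
  have "length ys = length xs" using perm_rows_length[OF perm] by simp
  then have "take (length xs - 1) xs = butlast xs" "take (length xs - 1) ys = butlast ys"
    by (simp_all add: butlast_conv_take)
  then have "set (take (length xs - 1) xs) = set (take (length xs - 1) ys)"
    using perm eq by (simp add: set_butlast_distinct perm_rows_def)
  then have "reducible_at (xs, ys) (length xs - 1)"
    using len by (auto simp: reducible_at_def)
  with irr show False by (simp add: irreducible_rows_def)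
qed

lemma irreducible_rows_prefix_not_subset:
  assumes perm: "perm_rows (xs, ys)" and irr: "irreducible_rows (xs, ys)"
    and p: "1 \<le> p" "p < length xs"
  shows "\<not> set (take p ys) \<subseteq> set (take p xs)"
proof
  assume sub: "set (take p ys) \<subseteq> set (take p xs)"
  have "length ys = length xs" using perm_rows_length[OF perm] by simp
  then have "card (set (take p ys)) = card (set (take p xs))"
    using perm p by (simp add: distinct_card perm_rows_def)
  then have "set (take p ys) = set (take p xs)" using sub by (simp add: card_subset_eq)
  then have "reducible_at (xs, ys) p" using p by (simp add: reducible_at_def)
  with irr show False by (simp add: irreducible_rows_def)
qed

lemma rauzy_steps_exchange_last:
  "rauzy_step\<^sup>*\<^sup>* (X1 @ b # C1 @ g # C2 @ [z], Y1 @ z # U1 @ b # U2)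
                 (X1 @ b # C2 @ z # C1 @ [g], Y1 @ z # U2 @ U1 @ [b])"
proof -
  have "rauzy_step\<^sup>*\<^sup>* (X1 @ b # C1 @ g # C2 @ [z], Y1 @ z # U1 @ b # U2)
                          (X1 @ b # C1 @ g # C2 @ [z], Y1 @ z # U2 @ U1 @ [b])"
    using rauzy_steps_rotate_bottom[where U = "U1 @ [b]" and V = U2] by simp
  also have "rauzy_step (X1 @ b # C1 @ g # C2 @ [z], Y1 @ z # U2 @ U1 @ [b])
                        (X1 @ b # z # C1 @ g # C2, Y1 @ z # U2 @ U1 @ [b])"
    using rauzy_step.bottom[where vs = "C1 @ g # C2"] by simp
  also have "rauzy_step\<^sup>*\<^sup>* (X1 @ b # z # C1 @ g # C2, Y1 @ z # U2 @ U1 @ [b])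
                               (X1 @ b # C2 @ z # C1 @ [g], Y1 @ z # U2 @ U1 @ [b])"
    using rauzy_steps_rotate_top[where U = "z # C1 @ [g]" and V = C2] by simp
  finally show ?thesis .
qed

lemma rauzy_steps_decrease_last_position:
  assumes perm: "perm_rows (xs, Y1 @ z # Y2)" and irr: "irreducible_rows (xs, Y1 @ z # Y2)"
    and z: "last xs = z" and "Y1 \<noteq> []"
  shows "\<exists>xs' Y1' Y2'. rauzy_step\<^sup>*\<^sup>* (xs, Y1 @ z # Y2) (xs', Y1' @ last xs' # Y2')
           \<and> length Y1' < length Y1"
proof -
  txt \<open>Irreducibility at \<open>p = length Y1\<close> yields \<open>g \<in> Y1\<close> outside the first \<open>p\<close> top letters and
    \<open>b\<close> among them outside \<open>Y1\<close>; making \<open>b\<close> end the bottom row and then \<open>g\<close> end the top row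
    moves the last top letter into \<open>Y1\<close>.\<close>
  define p where "p = length Y1"
  have dx: "distinct xs" and dy: "distinct (Y1 @ z # Y2)" and same: "set xs = set (Y1 @ z # Y2)"
    using perm by (auto simp: perm_rows_def)
  have len: "length xs = length (Y1 @ z # Y2)" using perm_rows_length[OF perm] by simp
  have "Y2 \<noteq> []"
    using irreducible_rows_last_neq[OF perm irr] z len \<open>Y1 \<noteq> []\<close> by (cases Y1) auto
  then have p: "1 \<le> p" "p < length xs" using len \<open>Y1 \<noteq> []\<close> by (auto simp: p_def Suc_le_eq)
  have "take p (Y1 @ z # Y2) = Y1" by (simp add: p_def)
  then obtain g where g: "g \<in> set Y1" "g \<notin> set (take p xs)"
    using irreducible_rows_prefix_not_subset[OF perm irr p] by auto
  have "perm_rows (Y1 @ z # Y2, xs)" "irreducible_rows (Y1 @ z # Y2, xs)"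
    using irreducible_rows_swap[OF perm] perm_rows_swap[of "(xs, Y1 @ z # Y2)"] perm irr by simp_all
  then have "\<not> set (take p xs) \<subseteq> set (take p (Y1 @ z # Y2))"
    using irreducible_rows_prefix_not_subset[of "Y1 @ z # Y2" xs p] p len by simp
  then have "\<not> set (take p xs) \<subseteq> set Y1" unfolding \<open>take p (Y1 @ z # Y2) = Y1\<close> .
  then obtain b where b: "b \<in> set (take p xs)" "b \<notin> set Y1" by blast
  obtain X1 R where R: "take p xs = X1 @ b # R" using b(1) by (metis split_list)
  have "b \<noteq> z" using last_notin_set_take[OF dx p(2)] b(1) z by auto
  then have "b \<in> set Y2" using b same by (auto dest: in_set_takeD)
  then obtain U1 U2 where U: "Y2 = U1 @ b # U2" by (metis split_list)
  define X2 where "X2 = R @ drop p xs"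
  have X: "xs = X1 @ b # X2" using R X2_def by (metis append.assoc append_Cons append_take_drop_id)
  then obtain X2' where X2': "X2 = X2' @ [z]"
    using z \<open>b \<noteq> z\<close> by (cases X2 rule: rev_cases) auto
  have "g \<notin> set X1" "g \<noteq> b" using g b R by auto
  moreover have "g \<noteq> z" using g dy by auto
  ultimately have "g \<in> set X2'" using g(1) same X X2' by auto
  then obtain C1 C2 where C: "X2' = C1 @ g # C2" by (metis split_list)
  obtain D1 D2 where D: "Y1 = D1 @ g # D2" using g(1) by (metis split_list)
  have "rauzy_step\<^sup>*\<^sup>* (xs, Y1 @ z # Y2)
          (X1 @ b # C2 @ z # C1 @ [g], D1 @ g # D2 @ z # U2 @ U1 @ [b])"
    using rauzy_steps_exchange_last[of X1 b C1 g C2 z Y1 U1 U2] X X2' C U D by simp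
  moreover have "length D1 < length Y1" using D by simp
  ultimately have "rauzy_step\<^sup>*\<^sup>* (xs, Y1 @ z # Y2) (X1 @ b # C2 @ z # C1 @ [g],
      D1 @ last (X1 @ b # C2 @ z # C1 @ [g]) # D2 @ z # U2 @ U1 @ [b]) \<and> length D1 < length Y1"
    by simp
  then show ?thesis by blast
qed

lemma rauzy_steps_last_to_front:
  assumes "perm_rows (xs, Y1 @ last xs # Y2)" "irreducible_rows (xs, Y1 @ last xs # Y2)"
  shows "\<exists>xs' Y2'. rauzy_step\<^sup>*\<^sup>* (xs, Y1 @ last xs # Y2) (xs', last xs' # Y2')"
  using assms
proof (induction "length Y1" arbitrary: xs Y1 Y2 rule: less_induct)
  case less
  show ?case
  proof (cases "Y1 = []")
    case True
    then show ?thesis by auto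
  next
    case False
    then obtain xs' Y1' Y2' where steps: "rauzy_step\<^sup>*\<^sup>* (xs, Y1 @ last xs # Y2) (xs', Y1' @ last xs' # Y2')"
      and shorter: "length Y1' < length Y1"
      using rauzy_steps_decrease_last_position[OF less.prems refl] by blast
    have "perm_rows (xs', Y1' @ last xs' # Y2')" "irreducible_rows (xs', Y1' @ last xs' # Y2')"
      using rauzy_steps_perm_rows[OF steps] rauzy_steps_irreducible_rows[OF steps] less.prems by auto
    then obtain xs'' Y2'' where "rauzy_step\<^sup>*\<^sup>* (xs', Y1' @ last xs' # Y2') (xs'', last xs'' # Y2'')"
      using less.hyps[OF shorter] by blast
    then show ?thesis using rtranclp_trans[OF steps] by blast
  qed
qed

definition standard_rows :: "'a rows \<Rightarrow> bool" where
  "standard_rows s \<longleftrightarrow> (\<exists>a b T B. s = (a # T @ [b], b # B @ [a]))"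

lemma rauzy_steps_to_standard:
  assumes perm: "perm_rows s" and irr: "irreducible_rows s" and len: "2 \<le> length (fst s)"
  shows "\<exists>t. rauzy_step\<^sup>*\<^sup>* s t \<and> standard_rows t"
proof -
  obtain xs ys where s: "s = (xs, ys)" by fastforce
  have dx: "distinct xs" and same: "set xs = set ys"
    using perm[unfolded perm_rows_def s fst_conv snd_conv] by blast+
  have "xs \<noteq> []" using len s by auto
  then have "last xs \<in> set ys" using same by (metis last_in_set)
  then obtain Y1 Y2 where ys: "ys = Y1 @ last xs # Y2" by (metis split_list)
  have "\<exists>xs' Y2'. rauzy_step\<^sup>*\<^sup>* s (xs', last xs' # Y2')"
    using rauzy_steps_last_to_front[of xs Y1 Y2] perm irr unfolding s ys by blast
  then obtain xs' Y2' where steps: "rauzy_step\<^sup>*\<^sup>* s (xs', last xs' # Y2')" by blast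
  have perm': "perm_rows (xs', last xs' # Y2')" and same': "set xs' = set xs"
    using rauzy_steps_perm_rows[OF steps perm] unfolding s by auto
  then have "distinct xs'" by (simp add: perm_rows_def)
  then have "length xs' = length xs"
    using distinct_card[OF dx] distinct_card[of xs'] same' by simp
  then have len': "2 \<le> length xs'" using len s by simp
  then obtain a R where "xs' = a # R" by (cases xs') auto
  moreover have "R \<noteq> []" using len' calculation by auto
  ultimately obtain T l where xs': "xs' = a # T @ [l]"
    by (cases R rule: rev_cases) auto
  have "a \<in> set Y2'"
    using perm' unfolding xs' perm_rows_def by auto
  then obtain U1 U2 where U: "Y2' = U1 @ a # U2" by (metis split_list)
  have "rauzy_step\<^sup>*\<^sup>* (xs', [] @ last xs' # (U1 @ [a]) @ U2) (xs', [] @ last xs' # U2 @ U1 @ [a])"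
    by (rule rauzy_steps_rotate_bottom) (simp_all add: xs')
  with steps U have "rauzy_step\<^sup>*\<^sup>* s (xs', last xs' # U2 @ U1 @ [a])"
    by (simp add: rtranclp_trans)
  then have "rauzy_step\<^sup>*\<^sup>* s (a # T @ [l], l # (U2 @ U1) @ [a])" by (simp add: xs')
  then show ?thesis unfolding standard_rows_def by blast
qed

section \<open>Descent on the longest reducible prefix\<close>

lemma rauzy_steps_standard_shift:
  assumes "T2 \<noteq> []" "last T2 = x"
  shows "rauzy_step\<^sup>*\<^sup>* (a # (T1 @ bt # T2) @ [b], b # (bt # B1 @ x # rest) @ [a])
                        (a # (T2 @ T1 @ [bt]) @ [b], b # (B1 @ x # bt # rest) @ [a])"
proof -
  have "rauzy_step\<^sup>*\<^sup>* (a # (T1 @ bt # T2) @ [b], b # (bt # B1 @ x # rest) @ [a])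
                          (a # T1 @ bt # T2 @ [b], b # B1 @ x # rest @ [a, bt])"
    using rauzy_steps_rotate_bottom[where us = "[]" and U = "[bt]" and V = "B1 @ x # rest @ [a]"]
    by simp
  also have "rauzy_step (a # T1 @ bt # T2 @ [b], b # B1 @ x # rest @ [a, bt])
                        (a # T1 @ bt # b # T2, b # B1 @ x # rest @ [a, bt])"
    using rauzy_step.bottom[where us = "a # T1" and vs = T2] by simp
  also have "rauzy_step (a # T1 @ bt # b # T2, b # B1 @ x # rest @ [a, bt])
                        (a # T1 @ bt # b # T2, b # B1 @ x # bt # rest @ [a])"
    using rauzy_step.top[where us = "b # B1" and vs = "rest @ [a]"] assms by simp
  also have "rauzy_step\<^sup>*\<^sup>* (a # T1 @ bt # b # T2, b # B1 @ x # bt # rest @ [a])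
                               (a # (T2 @ T1 @ [bt]) @ [b], b # (B1 @ x # bt # rest) @ [a])"
    using rauzy_steps_rotate_top[where us = "[]" and U = "T1 @ [bt, b]" and V = T2] by simp
  finally show ?thesis .
qed

text \<open>The inner rows \<open>T = T1 @ bt # T2\<close> and \<open>B = bt # B1 @ x # rest\<close> of a standard pair, where
  \<open>bt\<close> is the first letter of \<open>B\<close> and \<open>x\<close> the last letter of \<open>T\<close>; \<open>rest \<noteq> []\<close> says that \<open>T\<close> and
  \<open>B\<close> end differently.\<close>

context
  fixes T1 T2 B1 rest :: "'a list" and bt x :: 'a and L :: nat
  assumes perm: "perm_rows (T1 @ bt # T2, bt # B1 @ x # rest)"
    and T2: "T2 \<noteq> []" "last T2 = x"
    and rest: "rest \<noteq> []"
    and L_reducible: "reducible_at (T1 @ bt # T2, bt # B1 @ x # rest) L"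
    and L_max: "\<And>l. reducible_at (T1 @ bt # T2, bt # B1 @ x # rest) l \<Longrightarrow> l \<le> L"
begin

private lemma distinct_rows: "distinct (T1 @ bt # T2)" "distinct (bt # B1 @ x # rest)"
  and same_set: "set (T1 @ bt # T2) = set (bt # B1 @ x # rest)"
  using perm[unfolded perm_rows_def fst_conv snd_conv] by blast+

private lemma L_bounds: "1 \<le> L" "L < length (T1 @ bt # T2)"
  and L_prefixes: "set (take L (T1 @ bt # T2)) = set (take L (bt # B1 @ x # rest))"
  using L_reducible by (simp_all add: reducible_at_def)

private lemma take_L_bottom: "take L (bt # B1 @ x # rest) = bt # take (L - 1) B1"
proof -
  have "x \<notin> set (take L (T1 @ bt # T2))"
    using last_notin_set_take[OF distinct_rows(1) L_bounds(2)] T2 by simp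
  then have "x \<notin> set (take L ((bt # B1) @ x # rest))"
    unfolding append_Cons L_prefixes[symmetric] .
  then have "L \<le> Suc (length B1)"
    using in_set_take_append_Cons[of "bt # B1" L x rest] by (cases "L \<le> Suc (length B1)") auto
  moreover obtain L' where "L = Suc L'" using L_bounds(1) by (cases L) auto
  ultimately show ?thesis by simp
qed

private lemma take_L_top: "take L (T1 @ bt # T2) = T1 @ bt # take (L - Suc (length T1)) T2"
proof -
  have "bt \<in> set (take L (T1 @ bt # T2))" using L_prefixes take_L_bottom by simp
  then have "length T1 < L" using distinct_rows(1)
    by (cases "length T1 < L") (auto dest: in_set_takeD)
  then show ?thesis by (simp add: take_Cons')
qed

private lemma take_L_top_contains: "insert bt (set T1) \<subseteq> set (take L (T1 @ bt # T2))"
  unfolding take_L_top by auto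

private lemma T1_subset: "set T1 \<subseteq> set (take (L - 1) B1)"
  using take_L_top_contains L_prefixes[unfolded take_L_bottom] distinct_rows(1) by auto

private lemma rest_subset: "set rest \<subseteq> set T2"
proof
  fix r assume r: "r \<in> set rest"
  then have "r \<notin> set (take L (T1 @ bt # T2))"
    using L_prefixes[unfolded take_L_bottom] distinct_rows(2) by (auto dest: in_set_takeD)
  then show "r \<in> set T2" using r same_set take_L_top_contains by auto
qed

private lemma shifted_reducible_short:
  assumes red: "reducible_at (T2 @ T1 @ [bt], B1 @ x # bt # rest) l"
  shows "l \<le> Suc (length B1)"
    and "set (take l (T2 @ T1 @ [bt])) = set (take l (B1 @ x # rest))"
proof -
  have l: "l < length (T2 @ T1 @ [bt])"
    and prefixes: "set (take l (T2 @ T1 @ [bt])) = set (take l (B1 @ x # bt # rest))"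
    using red unfolding reducible_at_def fst_conv snd_conv by blast+
  have "bt \<notin> set (take l (T2 @ T1 @ [bt]))"
    using last_notin_set_take[of "T2 @ T1 @ [bt]" l] distinct_rows(1) l by auto
  then have "bt \<notin> set (take l ((B1 @ [x]) @ bt # rest))"
    unfolding append_assoc append_Cons append_Nil prefixes[symmetric] .
  then show short: "l \<le> Suc (length B1)"
    using in_set_take_append_Cons[of "B1 @ [x]" l bt rest] by (cases "l \<le> Suc (length B1)") auto
  show "set (take l (T2 @ T1 @ [bt])) = set (take l (B1 @ x # rest))"
    using prefixes take_append_Cons_le[OF short] by metis
qed

lemma reducible_at_standard_shift_lt:
  assumes red: "reducible_at (T2 @ T1 @ [bt], B1 @ x # bt # rest) l"
  shows "l < L"
proof (rule ccontr)
  assume "\<not> l < L"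
  note short = shifted_reducible_short[OF red]
  show False
  proof (cases "l \<le> length T2")
    case True
    then have top: "set (take l T2) = set (take l (B1 @ x # rest))" using short(2) by simp
    show False
    proof (cases T1)
      case Nil
      have "set (take (Suc l) (T1 @ bt # T2)) = set (take (Suc l) (bt # B1 @ x # rest))"
        using top Nil by simp
      moreover have "Suc l < length (T1 @ bt # T2)"
        using short(1) rest perm_rows_length[OF perm] by (cases rest) auto
      ultimately have "reducible_at (T1 @ bt # T2, bt # B1 @ x # rest) (Suc l)"
        by (simp add: reducible_at_def)
      with L_max \<open>\<not> l < L\<close> show False by fastforce
    next
      case (Cons t T1')
      have "set (take (L - 1) B1) \<subseteq> set (take l B1)"
        using \<open>\<not> l < L\<close> by (intro set_take_subset_set_take) simp
      also have "\<dots> \<subseteq> set (take l (B1 @ x # rest))" by simp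
      finally have "t \<in> set T2"
        using T1_subset Cons top by (auto dest: in_set_takeD)
      then show False using distinct_rows(1) Cons by auto
    qed
  next
    case False
    then have "set T2 \<subseteq> set (take l (B1 @ x # rest))" using short(2) by auto
    moreover obtain r where "r \<in> set rest" using rest by fastforce
    ultimately have "r \<in> set (take l (B1 @ x # rest))" using rest_subset by auto
    then have "r \<in> set (B1 @ [x])"
      using take_append_Cons_le[OF short(1)] by (metis in_set_takeD)
    then show False using \<open>r \<in> set rest\<close> distinct_rows(2) by auto
  qed
qed

end

definition good_rows :: "'a rows \<Rightarrow> bool" where
  "good_rows s \<longleftrightarrow> (\<exists>a b T B. s = (a # T @ [b], b # B @ [a]) \<and> irreducible_rows (T, B))"

definition degenerate_rows :: "'a rows \<Rightarrow> bool" where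
  "degenerate_rows s \<longleftrightarrow> (\<exists>a b T B. s = (a # T @ [b], b # B @ [a]) \<and> T \<noteq> [] \<and> last T = last B)"

lemma perm_rows_inner: "perm_rows (a # T @ [b], b # B @ [a]) \<Longrightarrow> perm_rows (T, B)"
  by (auto simp: perm_rows_def)

lemma rauzy_steps_decrease_max_reducible:
  assumes perm: "perm_rows (T, B)" and L_reducible: "reducible_at (T, B) L"
    and L_max: "\<And>l. reducible_at (T, B) l \<Longrightarrow> l \<le> L" and last: "last T \<noteq> last B"
  shows "\<exists>T' B'. rauzy_step\<^sup>*\<^sup>* (a # T @ [b], b # B @ [a]) (a # T' @ [b], b # B' @ [a])
           \<and> (\<forall>l. reducible_at (T', B') l \<longrightarrow> l < L)"
proof -
  have L: "1 \<le> L" "L < length T" "set (take L T) = set (take L B)"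
    using L_reducible by (auto simp: reducible_at_def)
  obtain bt B0 where B: "B = bt # B0"
    using L perm_rows_length[OF perm] by (cases B) auto
  have last_T: "last T \<notin> set (take L T)"
    using last_notin_set_take[of T L] L(2) perm by (simp add: perm_rows_def)
  have "bt \<in> set (take L T)" using L B by (cases L) auto
  then obtain T1 T2 where T: "T = T1 @ bt # T2" by (metis in_set_takeD split_list)
  with last_T \<open>bt \<in> set (take L T)\<close> have "T2 \<noteq> []" by auto
  define x where "x = last T2"
  have "x \<in> set B0"
    using perm \<open>T2 \<noteq> []\<close> last_T \<open>bt \<in> set (take L T)\<close> T B
    by (auto simp: perm_rows_def x_def)
  then obtain B1 rest where B0: "B0 = B1 @ x # rest" by (metis split_list)
  have "rest \<noteq> []" using last T B B0 x_def \<open>T2 \<noteq> []\<close> by auto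
  have "\<forall>l. reducible_at (T2 @ T1 @ [bt], B1 @ x # bt # rest) l \<longrightarrow> l < L"
    using reducible_at_standard_shift_lt[of T1 bt T2 B1 x rest L] perm L_reducible L_max
      \<open>T2 \<noteq> []\<close> \<open>rest \<noteq> []\<close> T B B0 x_def by blast
  moreover have "rauzy_step\<^sup>*\<^sup>* (a # T @ [b], b # B @ [a])
      (a # (T2 @ T1 @ [bt]) @ [b], b # (B1 @ x # bt # rest) @ [a])"
    using rauzy_steps_standard_shift[OF \<open>T2 \<noteq> []\<close> x_def[symmetric]] T B B0 by simp
  ultimately show ?thesis by blast
qed

lemma rauzy_steps_standard_to_good_or_degenerate:
  assumes "perm_rows (a # T @ [b], b # B @ [a])" "\<forall>l. reducible_at (T, B) l \<longrightarrow> l < K"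
  shows "\<exists>t. rauzy_step\<^sup>*\<^sup>* (a # T @ [b], b # B @ [a]) t \<and> (good_rows t \<or> degenerate_rows t)"
  using assms
proof (induction K arbitrary: T B rule: less_induct)
  case (less K)
  show ?case
  proof (cases "irreducible_rows (T, B)")
    case True
    then show ?thesis unfolding good_rows_def by blast
  next
    case False
    define L where "L = Max {l. reducible_at (T, B) l}"
    have fin: "finite {l. reducible_at (T, B) l}"
      by (rule finite_subset[of _ "{..<length T}"]) (auto simp: reducible_at_def)
    have L_reducible: "reducible_at (T, B) L" and L_max: "\<And>l. reducible_at (T, B) l \<Longrightarrow> l \<le> L"
      using False Max_in[OF fin] Max_ge[OF fin] by (auto simp: L_def irreducible_rows_def)
    show ?thesis
    proof (cases "last T = last B")
      case True
      moreover have "T \<noteq> []" using L_reducible by (auto simp: reducible_at_def)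
      ultimately show ?thesis unfolding degenerate_rows_def by blast
    next
      case False
      obtain T' B' where steps: "rauzy_step\<^sup>*\<^sup>* (a # T @ [b], b # B @ [a]) (a # T' @ [b], b # B' @ [a])"
        and shorter: "\<forall>l. reducible_at (T', B') l \<longrightarrow> l < L"
        using rauzy_steps_decrease_max_reducible[OF perm_rows_inner[OF less.prems(1)]
            L_reducible L_max False] by blast
      have "L < K" using L_reducible less.prems(2) by blast
      moreover have "perm_rows (a # T' @ [b], b # B' @ [a])"
        using rauzy_steps_perm_rows[OF steps less.prems(1)] by blast
      ultimately obtain t where "rauzy_step\<^sup>*\<^sup>* (a # T' @ [b], b # B' @ [a]) t"
        "good_rows t \<or> degenerate_rows t"
        using less.IH shorter by blast
      then show ?thesis using rtranclp_trans[OF steps] by blast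
    qed
  qed
qed

lemma rauzy_steps_to_good_or_degenerate:
  assumes "perm_rows s" "irreducible_rows s" "2 \<le> length (fst s)"
  shows "\<exists>t. rauzy_step\<^sup>*\<^sup>* s t \<and> (good_rows t \<or> degenerate_rows t)"
proof -
  obtain a b T B where steps: "rauzy_step\<^sup>*\<^sup>* s (a # T @ [b], b # B @ [a])"
    using rauzy_steps_to_standard[OF assms] unfolding standard_rows_def by blast
  have "perm_rows (a # T @ [b], b # B @ [a])" using rauzy_steps_perm_rows[OF steps assms(1)] by blast
  moreover have "\<forall>l. reducible_at (T, B) l \<longrightarrow> l < length T" by (simp add: reducible_at_def)
  ultimately obtain t where "rauzy_step\<^sup>*\<^sup>* (a # T @ [b], b # B @ [a]) t"
    "good_rows t \<or> degenerate_rows t"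
    by (blast dest: rauzy_steps_standard_to_good_or_degenerate)
  then show ?thesis using rtranclp_trans[OF steps] by blast
qed

section \<open>Pairs and their rows\<close>

definition enumerates :: "('a \<Rightarrow> nat) \<Rightarrow> 'a list \<Rightarrow> bool" where
  "enumerates f xs \<longleftrightarrow> (\<forall>i<length xs. f (xs ! i) = Suc i)"

definition represents :: "'a set \<Rightarrow> 'a rpair \<Rightarrow> 'a rows \<Rightarrow> bool" where
  "represents A q s \<longleftrightarrow> set (fst s) = A \<and> set (snd s) = A \<and>
     enumerates (fst q) (fst s) \<and> enumerates (snd q) (snd s)"

lemma enumerates_distinct: "enumerates f xs \<Longrightarrow> distinct xs"
  unfolding enumerates_def distinct_conv_nth by (metis Suc_inject)

lemma enumerates_eq_Suc_iff:
  assumes "enumerates f xs" "c \<in> set xs" "i < length xs"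
  shows "f c = Suc i \<longleftrightarrow> c = xs ! i"
proof -
  obtain j where "j < length xs" "c = xs ! j" using assms(2) by (auto simp: in_set_conv_nth)
  with assms show ?thesis
    using enumerates_distinct[OF assms(1)] by (auto simp: enumerates_def nth_eq_iff_index_eq)
qed

lemma enumerates_set_take:
  assumes "enumerates f xs"
  shows "{c \<in> set xs. f c \<le> k} = set (take k xs)"
proof (intro set_eqI iffI)
  fix c assume "c \<in> {c \<in> set xs. f c \<le> k}"
  then obtain i where "i < length xs" "c = xs ! i" "f c \<le> k" by (auto simp: in_set_conv_nth)
  with assms show "c \<in> set (take k xs)" by (auto simp: enumerates_def in_set_conv_nth)
next
  fix c assume "c \<in> set (take k xs)"
  then obtain i where "i < length xs" "i < k" "c = xs ! i" by (auto simp: in_set_conv_nth)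
  with assms show "c \<in> {c \<in> set xs. f c \<le> k}" by (auto simp: enumerates_def)
qed

lemma enumerates_appendD:
  assumes "enumerates f (xs @ ys)"
  shows "enumerates f xs" "enumerates (\<lambda>c. f c - length xs) ys"
proof -
  have at: "f ((xs @ ys) ! i) = Suc i" if "i < length xs + length ys" for i
    using assms that by (simp add: enumerates_def)
  show "enumerates f xs"
    unfolding enumerates_def using at by (metis nth_append_left trans_less_add1)
  show "enumerates (\<lambda>c. f c - length xs) ys"
    unfolding enumerates_def using at[of "length xs + _"] by simp
qed

lemma enumerates_restrict_infix:
  assumes "enumerates f (P @ T @ S)"
  shows "enumerates (\<lambda>b. card {c \<in> set T. f c \<le> f b}) T"
  unfolding enumerates_def
proof (intro allI impI)
  fix i assume i: "i < length T"
  have T: "enumerates (\<lambda>c. f c - length P) T"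
    using enumerates_appendD[OF assms] enumerates_appendD(1)[of _ T S] by blast
  have above: "length P < f c" if "c \<in> set T" for c
    using T that by (auto simp: enumerates_def in_set_conv_nth)
  have "f (T ! i) - length P = Suc i" using T i by (simp add: enumerates_def)
  then have "f (T ! i) = length P + Suc i" by linarith
  then have "{c \<in> set T. f c \<le> f (T ! i)} = {c \<in> set T. f c - length P \<le> Suc i}"
    using above by fastforce
  also have "\<dots> = set (take (Suc i) T)" by (rule enumerates_set_take[OF T])
  finally show "card {c \<in> set T. f c \<le> f (T ! i)} = Suc i"
    using enumerates_distinct[OF T] i by (simp add: distinct_card)
qed

lemma enumerates_of_bij:
  assumes "bij_betw f A {1..card A}"
  shows "\<exists>xs. set xs = A \<and> enumerates f xs"
proof -
  define xs where "xs = map (\<lambda>i. inv_into A f (Suc i)) [0..<card A]"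
  have "Suc ` {0..<card A} = {1..card A}"
    by (simp add: image_Suc_atLeastLessThan atLeastLessThanSuc_atLeastAtMost)
  moreover have "set xs = inv_into A f ` Suc ` {0..<card A}"
    unfolding xs_def by (simp only: set_map set_upt image_image)
  ultimately have "set xs = inv_into A f ` {1..card A}" by simp
  also have "\<dots> = A" using bij_betw_inv_into[OF assms] by (simp add: bij_betw_def)
  finally have "set xs = A" .
  moreover have "enumerates f xs"
    using assms unfolding enumerates_def xs_def
    by (auto intro!: f_inv_into_f simp: bij_betw_def)
  ultimately show ?thesis by blast
qed

lemma represents_perm_rows: "represents A q s \<Longrightarrow> perm_rows s"
  by (auto simp: represents_def perm_rows_def enumerates_distinct)

lemma represents_length:
  assumes "represents A q s"
  shows "length (fst s) = card A \<and> length (snd s) = card A"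
proof -
  have "set (fst s) = A" "set (snd s) = A" "distinct (fst s)" "distinct (snd s)"
    using assms by (auto simp: represents_def intro: enumerates_distinct)
  then show ?thesis using distinct_card[of "fst s"] distinct_card[of "snd s"] by simp
qed

lemma represents_irreducible_iff:
  assumes "represents A q (xs, ys)"
  shows "irreducible A q \<longleftrightarrow> irreducible_rows (xs, ys)"
proof -
  have sets: "set xs = A" "set ys = A" and en: "enumerates (fst q) xs" "enumerates (snd q) ys"
    using assms by (simp_all add: represents_def)
  have "{a \<in> A. fst q a \<le> k} = set (take k xs)" "{a \<in> A. snd q a \<le> k} = set (take k ys)" for k
    using enumerates_set_take[OF en(1)] enumerates_set_take[OF en(2)] sets by blast+
  moreover have "length xs = card A" using represents_length[OF assms] by simp
  ultimately show ?thesis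
    unfolding irreducible_def irreducible_rows_def reducible_at_def fst_conv snd_conv by auto
qed

lemma represents_swap [simp]: "represents A (prod.swap q) (prod.swap s) \<longleftrightarrow> represents A q s"
  by (auto simp: represents_def)

lemma rauzy_move_swap: "rauzy_move A True q = prod.swap (rauzy_move A False (prod.swap q))"
  by (simp add: rauzy_move_def Defs.comp_def Let_def)

lemma enumerates_insert_after:
  assumes g: "enumerates g (us @ z # vs @ [w])" and n: "n = length (us @ z # vs @ [w])"
  shows "enumerates (\<lambda>b. if g b \<le> g z then g b else if g b < n then g b + 1 else g z + 1)
           (us @ z # w # vs)"
  unfolding enumerates_def
proof (intro allI impI)
  fix i assume i: "i < length (us @ z # w # vs)"
  let ?h = "\<lambda>b. if g b \<le> g z then g b else if g b < n then g b + 1 else g z + 1"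
  have at: "g ((us @ z # vs @ [w]) ! j) = Suc j" if "j < n" for j
    using g that n by (simp add: enumerates_def)
  have gz: "g z = Suc (length us)" using at[of "length us"] n by simp
  have gw: "g w = n" using at[of "n - 1"] n by (simp add: nth_append)
  have "i \<le> length us \<or> i = Suc (length us) \<or> (\<exists>j. j < length vs \<and> i = Suc (Suc (length us + j)))"
  proof (cases "i \<le> Suc (length us)")
    case False
    moreover have "i < Suc (Suc (length us + length vs))" using i by simp
    ultimately have "i - Suc (Suc (length us)) < length vs \<and> i = Suc (Suc (length us + (i - Suc (Suc (length us)))))"
      by arith
    then show ?thesis by blast
  qed auto
  then consider "i \<le> length us" | "i = Suc (length us)"
    | j where "j < length vs" "i = Suc (Suc (length us + j))"
    by blast
  then show "?h ((us @ z # w # vs) ! i) = Suc i"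
  proof cases
    case 1
    then have "(us @ z # w # vs) ! i = (us @ z # vs @ [w]) ! i"
      by (cases "i = length us") (simp_all add: nth_append)
    then show ?thesis using at[of i] 1 gz n by simp
  next
    case 2
    then show ?thesis using gz gw n by (simp add: nth_append)
  next
    case 3
    then have "(us @ z # w # vs) ! i = (us @ z # vs @ [w]) ! Suc (length us + j)"
      by (simp add: nth_append)
    then show ?thesis using at[of "Suc (length us + j)"] 3 gz n by simp
  qed
qed

lemma represents_the_last:
  assumes "represents A q (xs, ys)" "xs \<noteq> []"
  shows "(THE c. c \<in> A \<and> fst q c = card A) = last xs"
proof (rule the_equality)
  have en: "enumerates (fst q) xs" and A: "set xs = A" using assms(1) by (simp_all add: represents_def)
  have len: "length xs = card A" using represents_length[OF assms(1)] by simp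
  have last: "last xs = xs ! (length xs - 1)" using assms(2) by (intro last_conv_nth) auto
  have iff: "fst q c = Suc (length xs - 1) \<longleftrightarrow> c = xs ! (length xs - 1)" if "c \<in> set xs" for c
    using enumerates_eq_Suc_iff[OF en that, of "length xs - 1"] assms(2) by simp
  have card: "Suc (length xs - 1) = card A" using assms(2) len by (cases xs) auto
  have mem: "last xs \<in> set xs" using assms(2) by simp
  then have "fst q (last xs) = card A" using iff[OF mem] last card by simp
  then show "last xs \<in> A \<and> fst q (last xs) = card A" using mem A by simp
  show "c = last xs" if "c \<in> A \<and> fst q c = card A" for c
    using iff[of c] that last A card by auto
qed

lemma rauzy_move_top_represents:
  assumes R: "represents A q (xs, us @ z # vs @ [w])" and "xs \<noteq> []" "last xs = z"
  shows "represents A (rauzy_move A False q) (xs, us @ z # w # vs)"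
proof -
  have n: "card A = length (us @ z # vs @ [w])" using represents_length[OF R] by simp
  have the_z: "(THE c. c \<in> A \<and> fst q c = card A) = z"
    using represents_the_last[OF R assms(2)] assms(3) by simp
  have "rauzy_move A False q = (fst q, \<lambda>b. if snd q b \<le> snd q z then snd q b
      else if snd q b < card A then snd q b + 1 else snd q z + 1)"
    by (simp only: rauzy_move_def Let_def Defs.comp_def if_False if_True not_False_eq_True the_z)
  moreover have "enumerates (snd q) (us @ z # vs @ [w])" using R by (simp add: represents_def)
  ultimately show ?thesis
    using R enumerates_insert_after[OF _ n] by (auto simp: represents_def)
qed

lemma rauzy_step_represents:
  "rauzy_step s t \<Longrightarrow> represents A q s \<Longrightarrow> \<exists>e. represents A (rauzy_move A e q) t"
proof (induction rule: rauzy_step.induct)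
  case (top xs z us vs w)
  show ?case using rauzy_move_top_represents[OF top.prems top.hyps] by blast
next
  case (bottom ys z us vs w)
  then have "represents A (prod.swap q) (ys, us @ z # vs @ [w])"
    using represents_swap[of A q "(us @ z # vs @ [w], ys)"] by simp
  from rauzy_move_top_represents[OF this bottom.hyps]
  have "represents A (prod.swap (rauzy_move A True q)) (prod.swap (us @ z # w # vs, ys))"
    by (simp add: rauzy_move_swap)
  then show ?case by (simp only: represents_swap) blast
qed

lemma rauzy_steps_represents:
  assumes "rauzy_step\<^sup>*\<^sup>* s t" "represents A q s" "q \<in> rauzy_class A p"
  shows "\<exists>q'\<in>rauzy_class A p. represents A q' t"
  using assms
proof (induction rule: rtranclp_induct)
  case base
  then show ?case by blast
next
  case (step t u)
  then obtain q' where q': "q' \<in> rauzy_class A p" "represents A q' t" by blast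
  then obtain e where "represents A (rauzy_move A e q') u"
    using rauzy_step_represents[OF step.hyps(2)] by blast
  moreover have "rauzy_move A e q' \<in> rauzy_class A p" using q'(1) by (rule rauzy_class.step)
  ultimately show ?case by blast
qed

lemma represents_standard:
  assumes R: "represents A q (a # T @ [b], b # B @ [a])"
  shows "standard A q"
proof -
  have en: "enumerates (fst q) (a # T @ [b])" "enumerates (snd q) (b # B @ [a])"
    and A: "set (a # T @ [b]) = A"
    using R by (simp_all add: represents_def)
  have len: "card A = length T + 2" "length B = length T"
    using represents_length[OF R] by simp_all
  have "fst q a = 1" "snd q b = 1" using en by (auto simp: enumerates_def dest: spec[of _ 0])
  moreover have "fst q b = card A" "snd q a = card A"
    using en len by (auto simp: enumerates_def nth_append dest: spec[of _ "Suc (length T)"])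
  ultimately show ?thesis unfolding standard_def using A by auto
qed

lemma represents_standard_inner:
  assumes R: "represents A q (a # T @ [b], b # B @ [a])"
  shows "{c \<in> A. fst q c \<noteq> 1 \<and> snd q c \<noteq> 1} = set T"
proof -
  have en: "enumerates (fst q) (a # T @ [b])" "enumerates (snd q) (b # B @ [a])"
    and A: "set (a # T @ [b]) = A" "set (b # B @ [a]) = A"
    using R by (simp_all add: represents_def)
  have "fst q c = 1 \<longleftrightarrow> c = a" if "c \<in> A" for c
  proof -
    have "c \<in> set (a # T @ [b])" using that A(1) by blast
    from enumerates_eq_Suc_iff[OF en(1) this, of 0] show ?thesis by simp
  qed
  moreover have "snd q c = 1 \<longleftrightarrow> c = b" if "c \<in> A" for c
  proof -
    have "c \<in> set (b # B @ [a])" using that A(2) by blast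
    from enumerates_eq_Suc_iff[OF en(2) this, of 0] show ?thesis by simp
  qed
  moreover have "a \<notin> set T" "b \<notin> set T" using enumerates_distinct[OF en(1)] by auto
  ultimately show ?thesis using A by auto
qed

lemma represents_restrict_inner:
  assumes R: "represents A q (a # T @ [b], b # B @ [a])"
  shows "represents (set T) (restrict_pair (set T) q) (T, B)"
proof -
  have en: "enumerates (fst q) ([a] @ T @ [b])" "enumerates (snd q) ([b] @ B @ [a])"
    using R by (simp_all add: represents_def)
  have "set B = set T"
    using perm_rows_inner[OF represents_perm_rows[OF R]] by (simp add: perm_rows_def)
  then show ?thesis
    using enumerates_restrict_infix[OF en(1)] enumerates_restrict_infix[OF en(2)]
    by (simp add: represents_def restrict_pair_def)
qed

lemma represents_good:
  assumes R: "represents A q s" and "good_rows s"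
  shows "good A q"
proof -
  obtain a b T B where s: "s = (a # T @ [b], b # B @ [a])" and irr: "irreducible_rows (T, B)"
    using assms(2) unfolding good_rows_def by blast
  have R': "represents A q (a # T @ [b], b # B @ [a])" using R s by simp
  have "irreducible (set T) (restrict_pair (set T) q)"
    using represents_irreducible_iff[OF represents_restrict_inner[OF R']] irr by simp
  then show ?thesis
    using represents_standard[OF R'] represents_standard_inner[OF R'] by (simp add: good_def Let_def)
qed

lemma represents_degenerate:
  assumes R: "represents A q s" and "degenerate_rows s"
  shows "degenerate_star A q"
proof -
  obtain a b T B where s: "s = (a # T @ [b], b # B @ [a])" and "T \<noteq> []" and eq: "last T = last B"
    using assms(2) unfolding degenerate_rows_def by blast
  have R': "represents A q (a # T @ [b], b # B @ [a])" using R s by simp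
  have en: "enumerates (fst q) (a # T @ [b])" "enumerates (snd q) (b # B @ [a])"
    and A: "set T \<subseteq> A"
    using R' by (auto simp: represents_def)
  have len: "card A = length T + 2" "length B = length T"
    using represents_length[OF R'] by simp_all
  have "B \<noteq> []" using \<open>T \<noteq> []\<close> len(2) by auto
  have "(a # T @ [b]) ! length T = last T"
    using \<open>T \<noteq> []\<close> by (simp add: nth_append last_conv_nth nth_Cons')
  moreover have "(b # B @ [a]) ! length B = last B"
    using \<open>B \<noteq> []\<close> by (simp add: nth_append last_conv_nth nth_Cons')
  ultimately have "(a # T @ [b]) ! length T = last T" "(b # B @ [a]) ! length T = last T"
    using eq len(2) by simp_all
  then have "fst q (last T) = card A - 1" "snd q (last T) = card A - 1"
    using en len by (auto simp: enumerates_def dest: spec[of _ "length T"])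
  moreover have "last T \<in> A" using A \<open>T \<noteq> []\<close> by auto
  ultimately show ?thesis
    unfolding degenerate_star_def using represents_standard[OF R'] by blast
qed

theorem proposition6p3:
  fixes A :: "'a set" and p :: "'a rpair"
  assumes "finite A" and "card A \<ge> 4"
    and "is_pair A p" and "irreducible A p"
  shows "\<exists>q\<in>rauzy_class A p. good A q \<or> degenerate_star A q"
proof -
  obtain xs ys where "set xs = A" "enumerates (fst p) xs" "set ys = A" "enumerates (snd p) ys"
    using enumerates_of_bij assms(3) unfolding is_pair_def by metis
  then have R: "represents A p (xs, ys)" by (simp add: represents_def)
  have "irreducible_rows (xs, ys)" using represents_irreducible_iff[OF R] assms(4) by simp
  moreover have "2 \<le> length (fst (xs, ys))" using represents_length[OF R] assms(2) by simp
  ultimately obtain t where "rauzy_step\<^sup>*\<^sup>* (xs, ys) t" "good_rows t \<or> degenerate_rows t"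
    using rauzy_steps_to_good_or_degenerate represents_perm_rows[OF R] by blast
  moreover obtain q where "q \<in> rauzy_class A p" "represents A q t"
    using rauzy_steps_represents[OF calculation(1) R rauzy_class.base] by blast
  ultimately show ?thesis using represents_good represents_degenerate by blast
qed

end
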